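(* As $n\to\infty$ the polynomials $K_n(q,t)$ converge coefficientwise to a formal power series $K(q,t)$, and $$K(q,t)=\sum_{p=0}^{\infty}q^{2p^2}t^{2p(p-1)}\left(1+q^{8p+12}t^{8p+5}\right)\prod_{j=1}^{p}\frac{1+q^{2j+4}t^{2j+1}}{1-q^{2j}t^{2j}}.$$
   Context: For $n\ge1$, call a sequence $(s_0,\dots,s_{n-1})\in\{0,1\}^n$ (positions numbered from 0) admissible if every maximal block of consecutive 1's has length 1 or 2, except that a maximal block of length 3 is allowed if it starts at position 0. The weight of an admissible sequence is the product over its maximal blocks of 1's of: $q^{2k+2}t^{2k}$ for a block of length 1 at position $k$; $q^{2k+8}t^{2k+3}$ for a block of length 2 starting at position $k$; $q^{12}t^5$ for the block of length 3 at positions $0,1,2$. $K_n(q,t)$ is the sum of the weights of all admissible sequences of length $n$. *)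

theory Defs
  imports "HOL-Computational_Algebra.Formal_Power_Series"
begin

text \<open>Bivariate formal power series in q and t are modelled as power series in q
whose coefficients are power series in t, with rational coefficients:
type rat fps fps.  The coefficient of q^a t^b in F is fps_nth (fps_nth F a) b.\<close>

definition mono :: "nat \<Rightarrow> nat \<Rightarrow> rat fps fps" where
  "mono a b = fps_const (fps_X ^ b) * fps_X ^ a"

definition max_blocks :: "bool list \<Rightarrow> (nat \<times> nat) set" where
  "max_blocks s = {(k, l). 1 \<le> l \<and> k + l \<le> length s
       \<and> (\<forall>i. k \<le> i \<and> i < k + l \<longrightarrow> s ! i)
       \<and> (k = 0 \<or> \<not> s ! (k - 1))
       \<and> (k + l = length s \<or> \<not> s ! (k + l))}"

definition admissible :: "bool list \<Rightarrow> bool" where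
  "admissible s \<longleftrightarrow> (\<forall>(k, l) \<in> max_blocks s. l = 1 \<or> l = 2 \<or> (l = 3 \<and> k = 0))"

definition block_weight :: "nat \<Rightarrow> nat \<Rightarrow> rat fps fps" where
  "block_weight k l =
     (if l = 1 then mono (2*k + 2) (2*k)
      else if l = 2 then mono (2*k + 8) (2*k + 3)
      else mono 12 5)"

definition seq_weight :: "bool list \<Rightarrow> rat fps fps" where
  "seq_weight s = (\<Prod>(k, l) \<in> max_blocks s. block_weight k l)"

definition Kpoly :: "nat \<Rightarrow> rat fps fps" where
  "Kpoly n = (\<Sum>s \<in> {s. length s = n \<and> admissible s}. seq_weight s)"

definition Kterm :: "nat \<Rightarrow> rat fps fps" where
  "Kterm p = mono (2*p^2) (2*p*(p - 1)) * (1 + mono (8*p + 12) (8*p + 5))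
     * (\<Prod>j = 1..p. (1 + mono (2*j + 4) (2*j + 1)) * inverse (1 - mono (2*j) (2*j)))"

end

theory Submission
  imports Defs
begin

(* Cut an admissible sequence into runs of ones terminated by zeros.  Apart
   from the exceptional initial block 111, every run has length at most 2, so K_n is
   expressed through the polynomials short_sum m n: the weight of short-blocked sequences of
   length n placed at position m.  These obey a transfer recursion in (m, n), coming from
   the first run 0, 10 or 110 (Kpoly_decomposition, short_sum_Suc).

   On the series side, G_m(q,t) = sum_p q^(2p^2+2mp) t^(2p(p-1)+2mp) prod_{j<=p} ... is
   q-adically convergent and satisfies the same recursion; the recursion is a term-by-term
   identity between consecutive summands (G_term_Suc_index).  Since the recursion only
   involves higher powers of q as m grows, induction on n shows that short_sum m n and G_m
   agree below q^(2(m+n)+2) (short_sum_approximates_G).  The limit is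
   K = G_0 + q^12 t^5 G_4, whose defining series is exactly the series of the theorem. *)

unbundle fps_syntax

lemma all_True_range_Cons:
  "(\<forall>i. Suc k \<le> i \<and> i < Suc j \<longrightarrow> (x#s) ! i) \<longleftrightarrow> (\<forall>i. k \<le> i \<and> i < j \<longrightarrow> s ! i)"
  by (metis Suc_le_mono Suc_less_eq not_less_eq_eq nth_Cons_Suc Suc_le_D)

lemma max_blocks_Cons_Suc:
  "(Suc k, l) \<in> max_blocks (x#s) \<longleftrightarrow> (k, l) \<in> max_blocks s \<and> (k = 0 \<longrightarrow> \<not> x)"
  unfolding max_blocks_def using all_True_range_Cons[of k "k+l" x s] by (cases k) auto

lemma max_blocks_Cons_0:
  "(0, l) \<in> max_blocks (x#s) \<longleftrightarrow>
     x \<and> (l = 1 \<and> (s = [] \<or> \<not> hd s) \<or> 2 \<le> l \<and> (0, l - 1) \<in> max_blocks s)"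
proof (cases l)
  case (Suc j)
  have "(\<forall>i. 0 \<le> i \<and> i < Suc j \<longrightarrow> (x#s) ! i) \<longleftrightarrow>
          x \<and> (\<forall>i. 0 \<le> i \<and> i < j \<longrightarrow> s ! i)"
    using all_True_range_Cons[of 0 j x s] by (auto simp: less_Suc_eq_0_disj)
  then show ?thesis using Suc unfolding max_blocks_def by (cases j; cases s) auto
qed (simp add: max_blocks_def)

lemma max_blocks_Nil: "max_blocks [] = {}"
  by (simp add: max_blocks_def)

lemma max_blocks_Cons:
  "(k, l) \<in> max_blocks (x#s) \<longleftrightarrow>
     (if k = 0 then x \<and> (l = 1 \<and> (s = [] \<or> \<not> hd s) \<or> 2 \<le> l \<and> (0, l - 1) \<in> max_blocks s)
      else (k - 1, l) \<in> max_blocks s \<and> (k = 1 \<longrightarrow> \<not> x))"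
  by (cases k) (simp_all add: max_blocks_Cons_0 max_blocks_Cons_Suc)

definition shift_blocks :: "nat \<Rightarrow> nat \<times> nat \<Rightarrow> nat \<times> nat" where
  "shift_blocks r = (\<lambda>(k, l). (k + r, l))"

lemma mem_shift_blocks: "(k, l) \<in> shift_blocks r ` A \<longleftrightarrow> r \<le> k \<and> (k - r, l) \<in> A"
  by (force simp: shift_blocks_def image_iff)

lemma max_blocks_run:
  "max_blocks (replicate j True @ False # s) =
     (if j = 0 then {} else {(0, j)}) \<union> shift_blocks (Suc j) ` max_blocks s"
proof (rule set_eqI, clarify)
  fix k l
  show "(k, l) \<in> max_blocks (replicate j True @ False # s) \<longleftrightarrow>
        (k, l) \<in> (if j = 0 then {} else {(0, j)}) \<union> shift_blocks (Suc j) ` max_blocks s"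
    by (induction j arbitrary: k l) (auto simp: max_blocks_Cons mem_shift_blocks split: if_splits)
qed

lemma max_blocks_all_True:
  "max_blocks (replicate j True) = (if j = 0 then {} else {(0, j)})"
proof (rule set_eqI, clarify)
  fix k l
  show "(k, l) \<in> max_blocks (replicate j True) \<longleftrightarrow> (k, l) \<in> (if j = 0 then {} else {(0, j)})"
    by (induction j arbitrary: k l) (auto simp: max_blocks_Cons max_blocks_Nil split: if_splits)
qed

lemma long_initial_block:
  assumes "0 < j" shows "\<exists>l \<ge> j. (0, l) \<in> max_blocks (replicate j True @ s)"
  using assms
proof (induction s arbitrary: j)
  case Nil
  then show ?case by (simp add: max_blocks_all_True)
next
  case (Cons x s)
  show ?case
  proof (cases x)
    case True
    have "replicate j True @ x # s = replicate (Suc j) True @ s"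
      using True by (simp add: replicate_app_Cons_same)
    with Cons.IH[of "Suc j"] show ?thesis by (metis Suc_leD zero_less_Suc)
  next
    case False
    with Cons.prems show ?thesis by (auto simp: max_blocks_run)
  qed
qed

lemma max_blocks_initial:
  assumes "(0, l) \<in> max_blocks s" shows "s = replicate l True @ drop l s"
proof -
  have "take l s = replicate l True"
    using assms by (intro replicate_eqI) (auto simp: max_blocks_def in_set_conv_nth)
  then show ?thesis by (metis append_take_drop_id)
qed

lemma finite_max_blocks: "finite (max_blocks s)"
proof (rule finite_subset)
  show "max_blocks s \<subseteq> {..length s} \<times> {..length s}" by (auto simp: max_blocks_def)
qed simp

lemma prod_shift_blocks:
  "(\<Prod>(k, l) \<in> shift_blocks r ` A. f k l) = (\<Prod>(k, l) \<in> A. f (k + r) l)"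
  by (subst prod.reindex) (auto simp: inj_on_def shift_blocks_def case_prod_beta)

definition shifted_weight :: "nat \<Rightarrow> bool list \<Rightarrow> rat fps fps" where
  "shifted_weight m s = (\<Prod>(k, l) \<in> max_blocks s. block_weight (k + m) l)"

definition short_blocks :: "bool list \<Rightarrow> bool" where
  "short_blocks s \<longleftrightarrow> (\<forall>(k, l) \<in> max_blocks s. l \<le> 2)"

lemma shifted_weight_run:
  "shifted_weight m (replicate j True @ False # s) =
     (if j = 0 then 1 else block_weight m j) * shifted_weight (m + Suc j) s"
  by (simp add: shifted_weight_def max_blocks_run finite_max_blocks prod_shift_blocks
      mem_shift_blocks ac_simps)

lemma short_blocks_run:
  "short_blocks (replicate j True @ False # s) \<longleftrightarrow> j \<le> 2 \<and> short_blocks s"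
  by (auto simp: short_blocks_def max_blocks_run shift_blocks_def)

lemma shifted_weight_all_True:
  "shifted_weight m (replicate j True) = (if j = 0 then 1 else block_weight m j)"
  by (simp add: shifted_weight_def max_blocks_all_True)

lemma short_blocks_all_True: "short_blocks (replicate j True) \<longleftrightarrow> j \<le> 2"
  by (simp add: short_blocks_def max_blocks_all_True)

lemma not_short_blocks_TTT: "\<not> short_blocks (True # True # True # s)"
proof -
  obtain l where "l \<ge> 3" "(0, l) \<in> max_blocks (replicate 3 True @ s)"
    using long_initial_block[of 3 s] by auto
  then show ?thesis unfolding short_blocks_def by (force simp: numeral_eq_Suc)
qed

(* It reads off one
   terminated run at a time, which is what makes the transfer recursion visible. *)
fun short_weight :: "nat \<Rightarrow> bool list \<Rightarrow> rat fps fps" where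
  "short_weight m [] = 1"
| "short_weight m (False # s) = short_weight (Suc m) s"
| "short_weight m [True] = block_weight m 1"
| "short_weight m (True # False # s) = block_weight m 1 * short_weight (m + 2) s"
| "short_weight m [True, True] = block_weight m 2"
| "short_weight m (True # True # False # s) = block_weight m 2 * short_weight (m + 3) s"
| "short_weight m (True # True # True # s) = 0"

lemma short_weight_eq:
  "short_weight m s = (if short_blocks s then shifted_weight m s else 0)"
proof (induction m s rule: short_weight.induct)
  case (1 m)
  then show ?case using shifted_weight_all_True[of m 0] short_blocks_all_True[of 0] by simp
next
  case (2 m s)
  then show ?case using shifted_weight_run[of m 0 s] short_blocks_run[of 0 s] by simp
next
  case (3 m)
  then show ?case using shifted_weight_all_True[of m 1] short_blocks_all_True[of 1] by simp
next
  case (4 m s)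
  then show ?case using shifted_weight_run[of m 1 s] short_blocks_run[of 1 s] by simp
next
  case (5 m)
  then show ?case
    using shifted_weight_all_True[of m 2] short_blocks_all_True[of 2] by (simp add: numeral_eq_Suc)
next
  case (6 m s)
  then show ?case
    using shifted_weight_run[of m 2 s] short_blocks_run[of 2 s] by (simp add: numeral_eq_Suc)
next
  case (7 m s)
  then show ?case using not_short_blocks_TTT by simp
qed

fun triple_weight :: "bool list \<Rightarrow> rat fps fps" where
  "triple_weight [True, True, True] = block_weight 0 3"
| "triple_weight (True # True # True # False # s) = block_weight 0 3 * short_weight 4 s"
| "triple_weight s = 0"

lemma admissible_iff:
  "admissible s \<longleftrightarrow> (\<forall>(k, l) \<in> max_blocks s. l \<le> 2 \<or> (k, l) = (0, 3))"
proof -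
  have "1 \<le> l" if "(k, l) \<in> max_blocks s" for k l
    using that by (simp add: max_blocks_def)
  then show ?thesis unfolding admissible_def by fastforce
qed

lemma admissible_weight:
  "(if admissible s then seq_weight s else 0) = short_weight 0 s + triple_weight s"
proof (cases "(0, 3) \<in> max_blocks s")
  case False
  then have "admissible s \<longleftrightarrow> short_blocks s"
    unfolding admissible_iff short_blocks_def by auto
  moreover have "triple_weight s = 0"
    using False by (cases s rule: triple_weight.cases) (auto simp: max_blocks_Cons max_blocks_Nil)
  ultimately show ?thesis by (simp add: short_weight_eq seq_weight_def shifted_weight_def)
next
  case True
  then have s: "s = True # True # True # drop 3 s"
    using max_blocks_initial by (metis numeral_3_eq_3 replicate_Suc replicate_0 append_Cons append_Nil)
  show ?thesis
  proof (cases "drop 3 s")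
    case Nil
    then have "s = replicate 3 True" using s by (simp add: numeral_eq_Suc)
    then show ?thesis
      by (simp add: admissible_iff seq_weight_def max_blocks_all_True)
        (simp add: numeral_eq_Suc)
  next
    case (Cons x r)
    show ?thesis
    proof (cases x)
      case True
      have s4: "s = True # True # True # True # r" using s Cons True by simp
      then have "s = replicate 4 True @ r" by (simp add: numeral_eq_Suc)
      then obtain l where "l \<ge> 4" "(0, l) \<in> max_blocks s"
        using long_initial_block[of 4 r] by auto
      then have "\<not> admissible s" unfolding admissible_iff by fastforce
      then show ?thesis by (simp add: s4)
    next
      case False
      then have s3: "s = replicate 3 True @ False # r" using s Cons by (simp add: numeral_eq_Suc)
      then have "admissible s \<longleftrightarrow> short_blocks r"
        unfolding admissible_iff short_blocks_def by (auto simp: max_blocks_run shift_blocks_def)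
      moreover have "seq_weight s = block_weight 0 3 * shifted_weight 4 r"
        using shifted_weight_run[of 0 3 r] s3 by (simp add: seq_weight_def shifted_weight_def)
      ultimately show ?thesis using s Cons False by (simp add: short_weight_eq[of 4 r])
    qed
  qed
qed

lemma sum_lists_Suc:
  fixes f :: "bool list \<Rightarrow> 'a::comm_monoid_add"
  shows "(\<Sum>s | length s = Suc n. f s) =
           (\<Sum>s | length s = n. f (False # s)) + (\<Sum>s | length s = n. f (True # s))"
proof -
  let ?A = "{s :: bool list. length s = n}"
  have split: "{s. length s = Suc n} = Cons False ` ?A \<union> Cons True ` ?A"
    by (auto simp: length_Suc_conv image_iff)
  have fin: "finite ?A" using finite_lists_length_eq[of "UNIV :: bool set" n] by simp
  show ?thesis unfolding split
    by (subst sum.union_disjoint) (auto simp: fin sum.reindex)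
qed

definition short_sum :: "nat \<Rightarrow> nat \<Rightarrow> rat fps fps" where
  "short_sum m n = (\<Sum>s | length s = n. short_weight m s)"

lemma short_sum_0: "short_sum m 0 = 1"
  by (simp add: short_sum_def)

(* Transfer recursion: the first entry is a 0, or starts a run 10 or 110
   (possibly cut off by the end of the sequence, which the truncated subtraction absorbs). *)
lemma short_sum_Suc:
  "short_sum m (Suc n) = short_sum (Suc m) n + block_weight m 1 * short_sum (m + 2) (n - 1)
     + (if n = 0 then 0 else block_weight m 2 * short_sum (m + 3) (n - 2))"
proof -
  have two_ones: "(\<Sum>s | length s = n. short_weight m (True # True # s))
              = block_weight m 2 * short_sum (m + 3) (n - 1)" for n
    by (cases n) (simp_all add: sum_lists_Suc short_sum_def sum_distrib_left)
  have leading_one: "(\<Sum>s | length s = n. short_weight m (True # s))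
             = block_weight m 1 * short_sum (m + 2) (n - 1)
               + (if n = 0 then 0 else block_weight m 2 * short_sum (m + 3) (n - 2))"
    by (cases n) (simp_all add: sum_lists_Suc short_sum_def sum_distrib_left two_ones)
  show ?thesis by (simp add: sum_lists_Suc short_sum_def leading_one)
qed

lemma triple_sum: "(\<Sum>s | length s = n + 4. triple_weight s) = block_weight 0 3 * short_sum 4 n"
proof -
  have vanish: "triple_weight (False # s) = 0" "triple_weight (True # False # s) = 0"
    "triple_weight (True # True # False # s) = 0" "triple_weight (True # True # True # True # s) = 0"
    for s by simp_all
  have "n + 4 = Suc (Suc (Suc (Suc n)))" by simp
  then have "(\<Sum>s | length s = n + 4. triple_weight s)
               = (\<Sum>s | length s = n. triple_weight (True # True # True # False # s))"
    by (simp only: sum_lists_Suc vanish sum.neutral_const add_0_left add_0_right)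
  then show ?thesis by (simp add: short_sum_def sum_distrib_left)
qed

lemma Kpoly_decomposition:
  "Kpoly (n + 4) = short_sum 0 (n + 4) + block_weight 0 3 * short_sum 4 n"
proof -
  have fin: "finite {s :: bool list. length s = n + 4}"
    using finite_lists_length_eq[of "UNIV :: bool set"] by simp
  have "Kpoly (n + 4) = (\<Sum>s | length s = n + 4. if admissible s then seq_weight s else 0)"
    unfolding Kpoly_def using sum.inter_filter[OF fin, of seq_weight admissible]
    by (simp add: conj_commute)
  also have "\<dots> = short_sum 0 (n + 4) + (\<Sum>s | length s = n + 4. triple_weight s)"
    by (simp add: admissible_weight sum.distrib short_sum_def)
  also have "(\<Sum>s | length s = n + 4. triple_weight s) = block_weight 0 3 * short_sum 4 n"
    by (rule triple_sum)
  finally show ?thesis .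
qed

lemma mono_mult: "Defs.mono a b * Defs.mono c d = Defs.mono (a + c) (b + d)"
proof -
  have "Defs.mono a b * Defs.mono c d
          = (fps_const (fps_X ^ b) * fps_const (fps_X ^ d)) * (fps_X ^ a * fps_X ^ c)"
    unfolding Defs.mono_def by (simp only: ac_simps)
  then show ?thesis unfolding Defs.mono_def fps_const_mult by (simp only: power_add)
qed

lemma mono_mult_eq:
  "a + c = e \<Longrightarrow> b + d = f \<Longrightarrow> Defs.mono a b * Defs.mono c d = Defs.mono e f"
  by (simp add: mono_mult)

lemma mono_0_0: "Defs.mono 0 0 = 1"
  by (simp add: Defs.mono_def)

lemma block_weight_1: "block_weight m 1 = Defs.mono (2*m + 2) (2*m)"
  and block_weight_2: "block_weight m 2 = Defs.mono (2*m + 8) (2*m + 3)"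
  by (simp_all add: block_weight_def)

lemma mono_times_nth:
  "(Defs.mono A B * f) $ a = (if a < A then 0 else fps_X ^ B * f $ (a - A))"
proof -
  have "Defs.mono A B * f = fps_const (fps_X ^ B) * (fps_X ^ A * f)"
    unfolding Defs.mono_def by (simp only: mult.assoc)
  then show ?thesis by (simp only: fps_mult_left_const_nth fps_X_power_mult_nth) simp
qed

lemma times_nth_cong:
  fixes h f g :: "'a::comm_semiring_1 fps"
  assumes "\<And>i. i \<le> a \<Longrightarrow> f $ i = g $ i"
  shows "(h * f) $ a = (h * g) $ a"
  unfolding fps_mult_nth using assms by (intro sum.cong) auto

lemma mono_times_nth_cong:
  assumes "\<And>i. i + A \<le> a \<Longrightarrow> f $ i = g $ i"
  shows "(Defs.mono A B * f) $ a = (Defs.mono A B * g) $ a"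
  using assms by (simp add: mono_times_nth)

(* A power series with constant term 1 is inverted by the library inverse; this holds
   over any coefficient ring with inverse 1 = 1 (here rational power series in t). *)
lemma fps_times_inverse_unit:
  fixes f :: "'a::{ring_1, inverse} fps"
  assumes "f $ 0 = 1" and "inverse (1 :: 'a) = 1"
  shows "f * inverse f = 1"
  using fps_right_inverse[of f "inverse (f $ 0)"] assms by (simp add: fps_inverse_def)

lemma one_minus_mono_inverse:
  assumes "0 < k" shows "(1 - Defs.mono k k) * inverse (1 - Defs.mono k k) = 1"
proof (rule fps_times_inverse_unit)
  show "(1 - Defs.mono k k) $ 0 = 1"
    using assms mono_times_nth[of k k 1 0] by simp
qed simp

definition factor_product :: "nat \<Rightarrow> rat fps fps" where
  "factor_product p =
     (\<Prod>j = 1..p. (1 + Defs.mono (2*j + 4) (2*j + 1)) * inverse (1 - Defs.mono (2*j) (2*j)))"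

(* The p-th summand of G_m(q,t) = sum_p q^(2p^2+2mp) t^(2p(p-1)+2mp) factor_product p.
   G_0 + q^12 t^5 G_4 is the series of the theorem. *)
definition G_term :: "nat \<Rightarrow> nat \<Rightarrow> rat fps fps" where
  "G_term m p = Defs.mono (2*p^2 + 2*m*p) (2*p*(p - 1) + 2*m*p) * factor_product p"

lemma G_term_0: "G_term m 0 = 1"
  by (simp add: G_term_def factor_product_def mono_0_0)

lemma Kterm_eq: "Kterm p = G_term 0 p + block_weight 0 3 * G_term 4 p"
proof -
  have "block_weight 0 3 * Defs.mono (2*p^2 + 2*4*p) (2*p*(p - 1) + 2*4*p)
          = Defs.mono (2*p^2) (2*p*(p - 1)) * Defs.mono (8*p + 12) (8*p + 5)"
    by (simp add: block_weight_def mono_mult algebra_simps)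
  then show ?thesis
    by (simp add: Kterm_def G_term_def factor_product_def algebra_simps)
qed

lemma G_term_Suc_shift: "G_term (Suc m) p = G_term m p * Defs.mono (2*p) (2*p)"
  unfolding G_term_def by (simp add: mono_mult algebra_simps)

lemma factor_product_Suc:
  "factor_product (Suc p) * (1 - Defs.mono (2 * Suc p) (2 * Suc p))
     = (1 + Defs.mono (2*p + 6) (2*p + 3)) * factor_product p"
proof -
  let ?x = "Defs.mono (2 * Suc p) (2 * Suc p)"
  have "factor_product (Suc p)
          = factor_product p * (1 + Defs.mono (2*p + 6) (2*p + 3)) * inverse (1 - ?x)"
    unfolding factor_product_def by (simp add: mult.assoc numeral_eq_Suc)
  then have "factor_product (Suc p) * (1 - ?x)
               = (1 + Defs.mono (2*p + 6) (2*p + 3)) * factor_product p * ((1 - ?x) * inverse (1 - ?x))"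
    by (simp only: ac_simps)
  then show ?thesis by (simp add: one_minus_mono_inverse)
qed

lemma G_term_Suc_index:
  "G_term m (Suc p) * (1 - Defs.mono (2 * Suc p) (2 * Suc p))
     = block_weight m 1 * G_term (m + 2) p + block_weight m 2 * G_term (m + 3) p"
proof -
  let ?M = "Defs.mono (2 * (Suc p)^2 + 2*m*Suc p) (2 * Suc p * p + 2*m*Suc p)"
  have run1: "?M = block_weight m 1 * Defs.mono (2*p^2 + 2*(m+2)*p) (2*p*(p - 1) + 2*(m+2)*p)"
    unfolding block_weight_1
    by (rule mono_mult_eq[symmetric]; cases p; simp add: algebra_simps power2_eq_square)
  have run2: "?M * Defs.mono (2*p + 6) (2*p + 3)
               = block_weight m 2 * Defs.mono (2*p^2 + 2*(m+3)*p) (2*p*(p - 1) + 2*(m+3)*p)"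
    unfolding block_weight_2 mono_mult by (cases p) (simp_all add: algebra_simps power2_eq_square)
  have "G_term m (Suc p) * (1 - Defs.mono (2 * Suc p) (2 * Suc p))
          = ?M * (factor_product (Suc p) * (1 - Defs.mono (2 * Suc p) (2 * Suc p)))"
    unfolding G_term_def by (simp only: mult.assoc diff_Suc_1)
  also have "\<dots> = (?M + ?M * Defs.mono (2*p + 6) (2*p + 3)) * factor_product p"
    by (simp only: factor_product_Suc distrib_left distrib_right mult_1_left mult_1_right mult.assoc)
  also have "\<dots> = block_weight m 1 * G_term (m + 2) p + block_weight m 2 * G_term (m + 3) p"
    unfolding run2 unfolding run1 G_term_def by (simp only: distrib_right mult.assoc)
  finally show ?thesis .
qed

lemma G_term_recurrence:
  "G_term m (Suc p) = G_term (Suc m) (Suc p)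
     + block_weight m 1 * G_term (m + 2) p + block_weight m 2 * G_term (m + 3) p"
proof -
  have "G_term m (Suc p) - G_term (Suc m) (Suc p)
          = G_term m (Suc p) * (1 - Defs.mono (2 * Suc p) (2 * Suc p))"
    by (simp only: G_term_Suc_shift right_diff_distrib mult_1_right)
  also have "\<dots> = block_weight m 1 * G_term (m + 2) p + block_weight m 2 * G_term (m + 3) p"
    by (rule G_term_Suc_index)
  finally show ?thesis by (simp add: diff_eq_eq ac_simps)
qed

(* The summands have q-order 2p^2 + 2mp, so the series converges q-adically. *)
lemma G_term_nth_zero:
  assumes "a < 2*p^2 + 2*m*p" shows "G_term m p $ a = 0"
  using assms by (simp add: G_term_def mono_times_nth)

lemma sum_nth_stable:
  fixes f :: "nat \<Rightarrow> 'a::comm_monoid_add fps"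
  assumes "N \<le> M" and "\<And>p. N \<le> p \<Longrightarrow> p < M \<Longrightarrow> f p $ a = 0"
  shows "(\<Sum>p<M. f p) $ a = (\<Sum>p<N. f p) $ a"
  using assms by (induction M rule: dec_induct) (auto simp: fps_sum_nth)

(* G_m as a q-adic limit: its q^a-coefficient is already fixed by the first a + 1 summands. *)
definition G_series :: "nat \<Rightarrow> rat fps fps" where
  "G_series m = Abs_fps (\<lambda>a. (\<Sum>p<Suc a. G_term m p) $ a)"

lemma G_series_partial: assumes "a < N" shows "(\<Sum>p<N. G_term m p) $ a = G_series m $ a"
proof -
  have "(\<Sum>p<N. G_term m p) $ a = (\<Sum>p<Suc a. G_term m p) $ a"
  proof (rule sum_nth_stable)
    fix p assume "Suc a \<le> p"
    moreover have "p \<le> p^2" by (simp add: power2_eq_square le_square)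
    then have "p \<le> 2*p^2 + 2*m*p" by linarith
    ultimately show "G_term m p $ a = 0" by (intro G_term_nth_zero) linarith
  qed (use assms in simp)
  then show ?thesis by (simp add: G_series_def)
qed

lemma G_series_low: assumes "a < 2*m + 2" shows "G_series m $ a = (1 :: rat fps fps) $ a"
proof -
  have "G_series m $ a = (\<Sum>p<Suc 0. G_term m p) $ a"
    unfolding G_series_def fps_nth_Abs_fps
  proof (rule sum_nth_stable)
    fix p assume "Suc 0 \<le> p"
    then have "1 \<le> p^2" and "m \<le> m*p" by (simp_all add: Suc_le_eq)
    then have "2*m + 2 \<le> 2*p^2 + 2*m*p" by linarith
    then show "G_term m p $ a = 0" using assms by (intro G_term_nth_zero) linarith
  qed simp
  then show ?thesis by (simp add: G_term_0)
qed

lemma G_partial_sum_recurrence: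
  "(\<Sum>p<Suc N. G_term m p) = (\<Sum>p<Suc N. G_term (Suc m) p)
     + block_weight m 1 * (\<Sum>p<N. G_term (m + 2) p) + block_weight m 2 * (\<Sum>p<N. G_term (m + 3) p)"
proof -
  have "(\<Sum>p<Suc N. G_term m p) = 1 + (\<Sum>p<N. G_term m (Suc p))"
    by (simp only: sum.lessThan_Suc_shift G_term_0)
  also have "\<dots> = 1 + (\<Sum>p<N. G_term (Suc m) (Suc p))
     + block_weight m 1 * (\<Sum>p<N. G_term (m + 2) p) + block_weight m 2 * (\<Sum>p<N. G_term (m + 3) p)"
    by (simp only: G_term_recurrence[of m] sum.distrib sum_distrib_left add.assoc)
  also have "1 + (\<Sum>p<N. G_term (Suc m) (Suc p)) = (\<Sum>p<Suc N. G_term (Suc m) p)"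
    by (simp only: sum.lessThan_Suc_shift G_term_0)
  finally show ?thesis .
qed

lemma G_series_recurrence:
  "G_series m = G_series (Suc m) + block_weight m 1 * G_series (m + 2)
                  + block_weight m 2 * G_series (m + 3)" (is "_ = ?R")
proof (rule fps_ext)
  fix a
  have tail: "(h * (\<Sum>p<Suc a. G_term k p)) $ a = (h * G_series k) $ a" for h k
    by (rule times_nth_cong) (rule G_series_partial, simp)
  have "G_series m $ a = (\<Sum>p<Suc (Suc a). G_term m p) $ a"
    by (rule G_series_partial[symmetric]) simp
  also have "\<dots> = ?R $ a"
    using G_series_partial[of a "Suc (Suc a)" "Suc m"]
    unfolding G_partial_sum_recurrence[where N = "Suc a" and m = m] fps_add_nth tail by simp
  finally show "G_series m $ a = ?R $ a" .
qed

(* Both short_sum m n and G_m obey the same recursion and begin with 1, so they agree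
   below q^(2(m+n)+2): every step of the recursion passes to a larger m, whose
   deviation from 1 starts at a higher power of q (G_series_low). *)
lemma short_sum_approximates_G:
  "a < 2 * (m + n) + 2 \<Longrightarrow> short_sum m n $ a = G_series m $ a"
proof (induction n arbitrary: m a rule: less_induct)
  case (less n)
  have IH: "short_sum m' j $ a' = G_series m' $ a'" if "j < n" "a' < 2 * (m' + j) + 2" for j m' a'
    using less.IH that by blast
  show ?case
  proof (cases n)
    case 0
    then show ?thesis using less.prems by (simp add: short_sum_0 G_series_low)
  next
    case (Suc k)
    have shift1: "G_series (Suc m) $ a = short_sum (Suc m) k $ a"
      using IH[where j = k and m' = "Suc m" and a' = a] less.prems Suc by simp
    have shift2: "(block_weight m 1 * G_series (m + 2)) $ a
                    = (block_weight m 1 * short_sum (m + 2) (k - 1)) $ a"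
      unfolding block_weight_1
    proof (rule mono_times_nth_cong)
      fix i assume "i + (2 * m + 2) \<le> a"
      then show "G_series (m + 2) $ i = short_sum (m + 2) (k - 1) $ i"
        using IH[where j = "k - 1" and m' = "m + 2" and a' = i] less.prems Suc by simp
    qed
    have shift3: "(block_weight m 2 * G_series (m + 3)) $ a
                    = (if k = 0 then 0 else block_weight m 2 * short_sum (m + 3) (k - 2)) $ a"
    proof (cases k)
      case 0
      then show ?thesis using less.prems Suc by (simp add: block_weight_2 mono_times_nth)
    next
      case (Suc k')
      have "(block_weight m 2 * G_series (m + 3)) $ a = (block_weight m 2 * short_sum (m + 3) (k' - 1)) $ a"
        unfolding block_weight_2
      proof (rule mono_times_nth_cong)
        fix i assume "i + (2 * m + 8) \<le> a"
        then show "G_series (m + 3) $ i = short_sum (m + 3) (k' - 1) $ i"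
          using IH[where j = "k' - 1" and m' = "m + 3" and a' = i] less.prems \<open>n = Suc k\<close> Suc
          by simp
      qed
      then show ?thesis using Suc by simp
    qed
    have "G_series m $ a = G_series (Suc m) $ a + (block_weight m 1 * G_series (m + 2)) $ a
                         + (block_weight m 2 * G_series (m + 3)) $ a"
      by (subst G_series_recurrence) simp
    then show ?thesis by (simp only: Suc short_sum_Suc fps_add_nth shift1 shift2 shift3)
  qed
qed

definition K_series :: "rat fps fps" where
  "K_series = G_series 0 + block_weight 0 3 * G_series 4"

lemma Kpoly_converges: "\<forall>\<^sub>F n in sequentially. Kpoly n $ a = K_series $ a"
proof (rule eventually_sequentiallyI)
  fix n assume "a + 4 \<le> n"
  define k where "k = n - 4"
  have n: "n = k + 4" and "a \<le> k" using \<open>a + 4 \<le> n\<close> by (simp_all add: k_def)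
  have "Kpoly n $ a = short_sum 0 (k + 4) $ a + (block_weight 0 3 * short_sum 4 k) $ a"
    by (simp only: n Kpoly_decomposition fps_add_nth)
  also have "short_sum 0 (k + 4) $ a = G_series 0 $ a"
    using \<open>a \<le> k\<close> by (intro short_sum_approximates_G) simp
  also have "(block_weight 0 3 * short_sum 4 k) $ a = (block_weight 0 3 * G_series 4) $ a"
    using \<open>a \<le> k\<close> by (intro times_nth_cong short_sum_approximates_G) simp
  finally show "Kpoly n $ a = K_series $ a" by (simp add: K_series_def)
qed

lemma Kterm_sums: "Kterm sums K_series"
  unfolding sums_def
proof (rule tendsto_fpsI, rule eventually_sequentiallyI)
  fix a N :: nat assume "Suc a \<le> N"
  have "(\<Sum>p<N. Kterm p) = (\<Sum>p<N. G_term 0 p) + block_weight 0 3 * (\<Sum>p<N. G_term 4 p)"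
    by (simp add: Kterm_eq sum.distrib sum_distrib_left)
  also have "\<dots> $ a = (\<Sum>p<N. G_term 0 p) $ a + (block_weight 0 3 * (\<Sum>p<N. G_term 4 p)) $ a"
    by (rule fps_add_nth)
  also have "(\<Sum>p<N. G_term 0 p) $ a = G_series 0 $ a"
    using \<open>Suc a \<le> N\<close> by (intro G_series_partial) simp
  also have "(block_weight 0 3 * (\<Sum>p<N. G_term 4 p)) $ a = (block_weight 0 3 * G_series 4) $ a"
    using \<open>Suc a \<le> N\<close> by (intro times_nth_cong G_series_partial) simp
  finally show "(\<Sum>p<N. Kterm p) $ a = K_series $ a" by (simp add: K_series_def)
qed

theorem mainTheorem11:
  "\<exists>K :: rat fps fps.
     (\<forall>a b. \<forall>\<^sub>F n in sequentially. fps_nth (fps_nth (Kpoly n) a) b = fps_nth (fps_nth K a) b)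
     \<and> Kterm sums K"
proof (intro exI conjI allI)
  fix a b
  show "\<forall>\<^sub>F n in sequentially. Kpoly n $ a $ b = K_series $ a $ b"
    using Kpoly_converges[of a] by eventually_elim simp
qed (rule Kterm_sums)

end
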